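(* Let $\Gamma$ be a 3-colex and $c\neq c'$ colors. If $S$ is a $Z$-stabilizer of the 3D toric code on $\Gamma^{*\setminus cc'}$, then there exists a $Z$-stabilizer $\overline S$ of the color code on $\Gamma$ such that $\pi_{cc'}(\overline S)=S$ and $\pi_{xy}(\overline S)=I$ for every unordered pair $\{x,y\}$ of distinct colors with $\{x,y\}\neq\{c,c'\}$.
   Context: Colors are $\{r,b,g,y\}$. A 3-colex $\Gamma$ is a 3-dimensional cell complex without boundary in which every vertex is 4-valent and lies in exactly four 3-cells, and whose 3-cells are properly 4-colored: every face lies in exactly two 3-cells, which have different colors. The dual complex $\Gamma^*$ has an $i$-cell for every $(3-i)$-cell of $\Gamma$, with incidences reversed; every 3-cell of $\Gamma^*$ is a tetrahedron. A vertex of $\Gamma^*$ is given the color of the corresponding 3-cell of $\Gamma$, so the four vertices of each tetrahedron have distinct colors. An edge with endpoint colors $x,y$ is an $xy$-edge. The 3D color code on $\Gamma$ has one qubit per tetrahedron $\nu$ of $\Gamma^*$, $X$-stabilizer generators $\prod_{\nu\ni v}X_\nu$ for vertices $v$, and $Z$-stabilizer generators $B^Z_e=\prod_{\nu\supset e}Z_\nu$ for edges $e$; $Z$-stabilizers are products of the $B^Z_e$. For distinct colors $x,y$ with remaining colors $u,w$: $\pi_{xy}(\nu)$ is the unique $uw$-edge of the tetrahedron $\nu$, and $\pi_{xy}(\prod_{\nu\in\Omega}Z_\nu)=\prod_{\nu\in\Omega}Z_{\pi_{xy}(\nu)}$ (with $Z^2=I$); $\pi_{xy}=\pi_{yx}$.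 The minor complex $\Gamma^{*\setminus xy}$ has as vertices the $u$- and $w$-vertices of $\Gamma^*$, as edges the $uw$-edges of $\Gamma^*$, one face $f_e$ for each $xy$-edge $e$ of $\Gamma^*$ whose boundary $\partial f_e$ is the set of $uw$-edges of the tetrahedra containing $e$ (these form a cycle), and one 3-cell for each vertex of color $x$ or $y$. The 3D toric code on $\Gamma^{*\setminus xy}$ has qubits on edges and $Z$-stabilizer generators $B^Z_{f}=\prod_{t\in\partial f}Z_t$ for faces $f$; its $Z$-stabilizers are products of these. *)

theory Defs
  imports Main
begin

text \<open>
  Tetrahedra of \<Gamma>* (= vertices of \<Gamma>) form a finite set T.
  The triangle of a tetrahedron \<nu> opposite to its vertex of colour x
  (= the edge of \<Gamma> at \<nu> not lying in the x-coloured 3-cell) is shared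
  with exactly one other tetrahedron, adj x \<nu>.
  Cells of \<Gamma>* are read off as in the colour-graph (gem) encoding:
  the vertex of colour x of \<nu> is the set of tetrahedra reachable from \<nu>
  by gluings along colours other than x (the x-coloured 3-cell of \<Gamma>),
  and the edge of \<nu> with endpoint colours C = {x,y} is the set of
  tetrahedra reachable from \<nu> by gluings along the two colours not in C
  (the face of \<Gamma> between the x-cell and the y-cell).
\<close>

datatype color = Red | Blue | Green | Yellow

definition glue_rel :: "(color \<Rightarrow> 't \<Rightarrow> 't) \<Rightarrow> color set \<Rightarrow> ('t \<times> 't) set" where
  "glue_rel adj S = {(a, adj x a) | a x. x \<in> S}"

definition comp :: "(color \<Rightarrow> 't \<Rightarrow> 't) \<Rightarrow> color set \<Rightarrow> 't \<Rightarrow> 't set" where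
  "comp adj S \<nu> = {\<mu>. (\<nu>, \<mu>) \<in> (glue_rel adj S)\<^sup>*}"

definition dvert :: "(color \<Rightarrow> 't \<Rightarrow> 't) \<Rightarrow> 't \<Rightarrow> color \<Rightarrow> color \<times> 't set" where
  "dvert adj \<nu> x = (x, comp adj (- {x}) \<nu>)"

definition dedge :: "(color \<Rightarrow> 't \<Rightarrow> 't) \<Rightarrow> 't \<Rightarrow> color set \<Rightarrow> color set \<times> 't set" where
  "dedge adj \<nu> C = (C, comp adj (- C) \<nu>)"

definition dedges :: "'t set \<Rightarrow> (color \<Rightarrow> 't \<Rightarrow> 't) \<Rightarrow> (color set \<times> 't set) set" where
  "dedges T adj = {dedge adj \<nu> C | \<nu> C. \<nu> \<in> T \<and> card C = 2}"

definition tets_at :: "'t set \<Rightarrow> (color \<Rightarrow> 't \<Rightarrow> 't) \<Rightarrow> color set \<times> 't set \<Rightarrow> 't set" where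
  "tets_at T adj e = {\<nu> \<in> T. dedge adj \<nu> (fst e) = e}"

text \<open>Every triangle of \<Gamma>* lies in exactly
  two (distinct) tetrahedra, and around every edge e the opposite edges of the
  tetrahedra containing e are pairwise distinct (they form a cycle).\<close>
definition colex3 :: "'t set \<Rightarrow> (color \<Rightarrow> 't \<Rightarrow> 't) \<Rightarrow> bool" where
  "colex3 T adj \<longleftrightarrow> finite T \<and>
     (\<forall>\<nu>\<in>T. \<forall>x. adj x \<nu> \<in> T \<and> adj x \<nu> \<noteq> \<nu> \<and> adj x (adj x \<nu>) = \<nu>) \<and>
     (\<forall>e\<in>dedges T adj. inj_on (\<lambda>\<mu>. dedge adj \<mu> (- fst e)) (tets_at T adj e))"

text \<open>Z-type Pauli operators are represented by their supports; the product of
  the family f over I (with Z^2 = I) has support of qubits in an odd number of f i.\<close>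
definition zprod :: "('i \<Rightarrow> 'q set) \<Rightarrow> 'i set \<Rightarrow> 'q set" where
  "zprod f I = {q. odd (card {i \<in> I. q \<in> f i})}"

text \<open>Color code: qubits = tetrahedra, B^Z_e = product over tetrahedra containing e.\<close>
definition cc_Zstab :: "'t set \<Rightarrow> (color \<Rightarrow> 't \<Rightarrow> 't) \<Rightarrow> 't set \<Rightarrow> bool" where
  "cc_Zstab T adj S \<longleftrightarrow> (\<exists>Es \<subseteq> dedges T adj. S = zprod (tets_at T adj) Es)"

text \<open>pi_{xy}: each tetrahedron is mapped to its uw-edge, where {u,w} = - {x,y}.\<close>
definition proj :: "(color \<Rightarrow> 't \<Rightarrow> 't) \<Rightarrow> color \<Rightarrow> color \<Rightarrow> 't set \<Rightarrow> (color set \<times> 't set) set" where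
  "proj adj x y S = zprod (\<lambda>\<nu>. {dedge adj \<nu> (- {x, y})}) S"

text \<open>Minor complex \<Gamma>*\<setminus>xy: boundary of the face f_e for an xy-edge e.\<close>
definition face_bdry :: "'t set \<Rightarrow> (color \<Rightarrow> 't \<Rightarrow> 't) \<Rightarrow> color \<Rightarrow> color \<Rightarrow> color set \<times> 't set
    \<Rightarrow> (color set \<times> 't set) set" where
  "face_bdry T adj x y e = {dedge adj \<nu> (- {x, y}) | \<nu>. \<nu> \<in> tets_at T adj e}"

definition tc_Zstab :: "'t set \<Rightarrow> (color \<Rightarrow> 't \<Rightarrow> 't) \<Rightarrow> color \<Rightarrow> color
    \<Rightarrow> (color set \<times> 't set) set \<Rightarrow> bool" where
  "tc_Zstab T adj x y S \<longleftrightarrow>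
     (\<exists>Fs \<subseteq> {e \<in> dedges T adj. fst e = {x, y}}. S = zprod (face_bdry T adj x y) Fs)"

end

theory Submission
  imports Defs
begin

text \<open>
  Take for \<open>\<overline>S\<close> the colour-code stabilizer \<open>\<Prod>\<^sub>e B\<^sup>Z\<^sub>e\<close> over the \<open>cc'\<close>-edges \<open>e\<close> whose faces
  \<open>f\<^sub>e\<close> make up \<open>S\<close>.  Projections commute with such products (a parity count, exchanging
  the order of summation), so it suffices to project a single \<open>B\<^sup>Z\<^sub>e\<close>.  The map \<open>\<pi>\<^sub>c\<^sub>c\<^sub>'\<close> sends
  the tetrahedra around \<open>e\<close> injectively onto \<open>\<partial>f\<^sub>e\<close>.  For any other pair \<open>{x,y}\<close> pick a colour
  \<open>z \<in> {x,y} - {c,c'}\<close>: gluing along \<open>z\<close> is a fixed-point-free involution on the tetrahedra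
  around \<open>e\<close> that preserves the \<open>\<pi>\<^sub>x\<^sub>y\<close>-image, so every edge is hit an even number of times.
\<close>

lemma even_card_if_involution:
  assumes "finite F" and "\<And>x. x \<in> F \<Longrightarrow> h x \<in> F \<and> h (h x) = x \<and> h x \<noteq> x"
  shows "even (card F)"
  using assms
proof (induction "card F" arbitrary: F rule: less_induct)
  case less
  show ?case
  proof (cases "F = {}")
    case False
    then obtain x where x: "x \<in> F" by blast
    have hx: "h x \<in> F" "h x \<noteq> x" "h (h x) = x" using less.prems(2)[OF x] by auto
    define F' where "F' = F - {x, h x}"
    have card_F: "card F = card F' + 2"
      using x hx less.prems(1) card_Diff_subset[of "{x, h x}" F] card_mono[of F "{x, h x}"]
      by (simp add: F'_def)
    have "even (card F')"
    proof (rule less.hyps)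
      show "card F' < card F" "finite F'" using card_F less.prems(1) by (auto simp: F'_def)
      fix y assume "y \<in> F'"
      then have "y \<in> F" "y \<noteq> x" "y \<noteq> h x" by (auto simp: F'_def)
      then show "h y \<in> F' \<and> h (h y) = y \<and> h y \<noteq> y"
        using less.prems(2) hx by (metis DiffI F'_def empty_iff insertE)
    qed
    then show ?thesis using card_F by simp
  qed simp
qed

lemma zprod_cong: "(\<And>i. i \<in> I \<Longrightarrow> f i = g i) \<Longrightarrow> zprod f I = zprod g I"
  unfolding zprod_def by (metis (no_types, lifting) Collect_cong)

lemma zprod_empty_family: "zprod (\<lambda>i. {}) I = {}"
  unfolding zprod_def by simp

lemma zprod_singleton_inj_on:
  assumes "inj_on f I"
  shows "zprod (\<lambda>i. {f i}) I = f ` I"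
proof (rule set_eqI)
  fix q
  have "{i \<in> I. q \<in> {f i}} = (if q \<in> f ` I then {the_inv_into I f q} else {})"
    using assms by (auto simp: the_inv_into_f_f inj_on_def)
  then show "q \<in> zprod (\<lambda>i. {f i}) I \<longleftrightarrow> q \<in> f ` I"
    by (simp add: zprod_def)
qed

text \<open>The support of a product of products: each \<open>q\<close> is counted modulo 2 through the
  double sum \<open>\<Sum>\<^sub>\<nu> #{i. \<nu> \<in> f i} = \<Sum>\<^sub>i #{\<nu> \<in> f i}\<close> over the \<open>\<nu>\<close> with \<open>q \<in> g \<nu>\<close>.\<close>
lemma zprod_zprod:
  assumes "finite I" and "finite A" and "\<And>i. i \<in> I \<Longrightarrow> f i \<subseteq> A"
  shows "zprod g (zprod f I) = zprod (\<lambda>i. zprod g (f i)) I"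
proof (rule set_eqI)
  fix q
  define A' where "A' = {\<nu> \<in> A. q \<in> g \<nu>}"
  define k where "k \<nu> = card {i \<in> I. \<nu> \<in> f i}" for \<nu>
  define m where "m i = card {\<nu> \<in> f i. q \<in> g \<nu>}" for i
  have "finite A'" using assms(2) by (simp add: A'_def)
  have support: "{\<nu> \<in> zprod f I. q \<in> g \<nu>} = {\<nu> \<in> A'. odd (k \<nu>)}"
  proof -
    have "\<nu> \<in> A" if "odd (k \<nu>)" for \<nu>
    proof -
      from that have "{i \<in> I. \<nu> \<in> f i} \<noteq> {}" by (auto simp: k_def simp del: Collect_empty_eq)
      then show ?thesis using assms(3) by blast
    qed
    then show ?thesis by (auto simp: zprod_def A'_def k_def)
  qed
  have double_count: "(\<Sum>\<nu>\<in>A'. k \<nu>) = (\<Sum>i\<in>I. m i)"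
  proof -
    have "(\<Sum>\<nu>\<in>A'. k \<nu>) = (\<Sum>\<nu>\<in>A'. \<Sum>i\<in>I. if \<nu> \<in> f i then 1 else 0)"
      using assms(1) by (simp add: k_def sum.inter_filter[symmetric])
    also have "\<dots> = (\<Sum>i\<in>I. \<Sum>\<nu>\<in>A'. if \<nu> \<in> f i then 1 else 0)"
      by (rule sum.swap)
    also have "\<dots> = (\<Sum>i\<in>I. m i)"
    proof (rule sum.cong)
      fix i assume "i \<in> I"
      then have "{\<nu> \<in> A'. \<nu> \<in> f i} = {\<nu> \<in> f i. q \<in> g \<nu>}"
        using assms(3) by (auto simp: A'_def)
      then show "(\<Sum>\<nu>\<in>A'. if \<nu> \<in> f i then 1 else 0) = m i"
        using \<open>finite A'\<close> by (simp add: m_def sum.inter_filter[symmetric])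
    qed simp
    finally show ?thesis .
  qed
  have "q \<in> zprod g (zprod f I) \<longleftrightarrow> odd (card {\<nu> \<in> A'. odd (k \<nu>)})"
    using support by (simp add: zprod_def)
  also have "\<dots> \<longleftrightarrow> odd (\<Sum>\<nu>\<in>A'. k \<nu>)"
    using even_sum_iff[OF \<open>finite A'\<close>, of k] by simp
  also have "\<dots> \<longleftrightarrow> odd (card {i \<in> I. odd (m i)})"
    using double_count even_sum_iff[OF assms(1), of m] by simp
  also have "\<dots> \<longleftrightarrow> q \<in> zprod (\<lambda>i. zprod g (f i)) I"
    by (simp add: zprod_def m_def)
  finally show "q \<in> zprod g (zprod f I) \<longleftrightarrow> q \<in> zprod (\<lambda>i. zprod g (f i)) I" .
qed

lemma UNIV_color: "(UNIV :: color set) = {Red, Blue, Green, Yellow}"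
  by (auto intro: color.exhaust)

lemma finite_dedges:
  assumes "finite T"
  shows "finite (dedges T adj)"
proof (rule finite_subset)
  show "dedges T adj \<subseteq> (\<lambda>(\<nu>, C). dedge adj \<nu> C) ` (T \<times> UNIV)"
    unfolding dedges_def by force
  show "finite ((\<lambda>(\<nu>, C). dedge adj \<nu> C) ` (T \<times> UNIV))"
    using assms by (simp add: UNIV_color Finite_Set.finite_set)
qed

lemma comp_adj:
  assumes "z \<in> S" and "adj z (adj z \<nu>) = \<nu>"
  shows "comp adj S (adj z \<nu>) = comp adj S \<nu>"
proof -
  have "(\<nu>, adj z \<nu>) \<in> glue_rel adj S" "(adj z \<nu>, \<nu>) \<in> glue_rel adj S"
    using assms unfolding glue_rel_def by (metis (mono_tags, lifting) mem_Collect_eq)+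
  then show ?thesis
    unfolding comp_def by (auto intro: rtrancl_trans[OF r_into_rtrancl])
qed

lemma dedge_adj:
  assumes "z \<notin> C" and "adj z (adj z \<nu>) = \<nu>"
  shows "dedge adj (adj z \<nu>) C = dedge adj \<nu> C"
  using comp_adj[of z "- C" adj \<nu>] assms by (simp add: dedge_def)

lemma colex3_finite: "colex3 T adj \<Longrightarrow> finite T"
  by (simp add: colex3_def)

lemma colex3_adj:
  assumes "colex3 T adj" and "\<nu> \<in> T"
  shows "adj z \<nu> \<in> T" and "adj z \<nu> \<noteq> \<nu>" and "adj z (adj z \<nu>) = \<nu>"
  using assms by (simp_all add: colex3_def)

lemma tets_at_adj:
  assumes "colex3 T adj" and "\<nu> \<in> tets_at T adj e" and "z \<notin> fst e"
  shows "adj z \<nu> \<in> tets_at T adj e"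
  using assms colex3_adj[OF assms(1)] dedge_adj[of z "fst e" adj \<nu>]
  by (simp add: tets_at_def)

lemma proj_tets_at_own_colors:
  assumes "colex3 T adj" and "e \<in> dedges T adj" and "fst e = {c, c'}"
  shows "proj adj c c' (tets_at T adj e) = face_bdry T adj c c' e"
proof -
  have "inj_on (\<lambda>\<mu>. dedge adj \<mu> (- {c, c'})) (tets_at T adj e)"
    using assms by (force simp: colex3_def)
  then show ?thesis
    by (simp add: proj_def face_bdry_def zprod_singleton_inj_on Setcompr_eq_image)
qed

lemma proj_tets_at_other_colors:
  assumes "colex3 T adj" and "fst e = {c, c'}" and "z \<in> {x, y}" and "z \<notin> {c, c'}"
  shows "proj adj x y (tets_at T adj e) = {}"
proof -
  have "even (card {\<nu> \<in> tets_at T adj e. q \<in> {dedge adj \<nu> (- {x, y})}})" for q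
  proof (rule even_card_if_involution)
    show "finite {\<nu> \<in> tets_at T adj e. q \<in> {dedge adj \<nu> (- {x, y})}}"
      using colex3_finite[OF assms(1)] by (simp add: tets_at_def)
    fix \<nu> assume "\<nu> \<in> {\<nu> \<in> tets_at T adj e. q \<in> {dedge adj \<nu> (- {x, y})}}"
    moreover from this have "\<nu> \<in> T" by (simp add: tets_at_def)
    ultimately show "adj z \<nu> \<in> {\<nu> \<in> tets_at T adj e. q \<in> {dedge adj \<nu> (- {x, y})}} \<and>
        adj z (adj z \<nu>) = \<nu> \<and> adj z \<nu> \<noteq> \<nu>"
      using assms tets_at_adj[OF assms(1), of \<nu> e z] colex3_adj[OF assms(1)]
        dedge_adj[of z "- {x, y}" adj \<nu>]
      by auto
  qed
  then show ?thesis by (simp add: proj_def zprod_def)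
qed

theorem lemma11:
  fixes T :: "'t set" and adj :: "color \<Rightarrow> 't \<Rightarrow> 't" and c c' :: color
    and S :: "(color set \<times> 't set) set"
  assumes "colex3 T adj"
    and "c \<noteq> c'"
    and "tc_Zstab T adj c c' S"
  shows "\<exists>Sb. cc_Zstab T adj Sb \<and> proj adj c c' Sb = S \<and>
           (\<forall>x y. x \<noteq> y \<and> {x, y} \<noteq> {c, c'} \<longrightarrow> proj adj x y Sb = {})"
proof -
  obtain Fs where Fs: "Fs \<subseteq> {e \<in> dedges T adj. fst e = {c, c'}}"
    and S: "S = zprod (face_bdry T adj c c') Fs"
    using assms(3) unfolding tc_Zstab_def by blast
  have "finite Fs"
    using finite_dedges[OF colex3_finite[OF assms(1)]] by (rule finite_subset[rotated]) (use Fs in auto)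
  define Sb where "Sb = zprod (tets_at T adj) Fs"
  have proj_Sb: "proj adj x y Sb = zprod (\<lambda>e. proj adj x y (tets_at T adj e)) Fs" for x y
    unfolding proj_def Sb_def
    by (rule zprod_zprod[OF \<open>finite Fs\<close> colex3_finite[OF assms(1)]]) (auto simp: tets_at_def)
  have "cc_Zstab T adj Sb"
    unfolding cc_Zstab_def Sb_def using Fs by blast
  moreover have "proj adj c c' Sb = S"
    unfolding proj_Sb S
    by (rule zprod_cong) (use Fs proj_tets_at_own_colors[OF assms(1)] in auto)
  moreover have "proj adj x y Sb = {}" if "x \<noteq> y" "{x, y} \<noteq> {c, c'}" for x y
  proof -
    have "\<not> (x \<in> {c, c'} \<and> y \<in> {c, c'})" using that by auto
    then obtain z where "z \<in> {x, y}" "z \<notin> {c, c'}" by blast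
    then have "proj adj x y Sb = zprod (\<lambda>e. {}) Fs"
      unfolding proj_Sb
      by (intro zprod_cong proj_tets_at_other_colors[OF assms(1)]) (use Fs in auto)
    then show ?thesis by (simp add: zprod_empty_family)
  qed
  ultimately show ?thesis by blast
qed

end
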